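(* Consider the sub-$\ell^\infty$ structure on $\mathbb{R}^3$ defined by $Y_1=\partial_x+\partial_y+y^2\partial_z$, $Y_2=\partial_x-\partial_y+y^2\partial_z$. Let $(\lambda,\gamma)$ be an extremal pair, $j\in\{1,2\}$, and $t_0$ a time such that the restriction to some interval $(t_0-\varepsilon,t_0)$ is a regular arc and the restriction to some interval $(t_0,t_0+\varepsilon)$ is a $\varphi_j$-singular arc (or the same with the roles of the two sides exchanged). Then on the regular arc the switching function $\varphi_j$ is a polynomial of degree $2$ in $t$, and $\varphi_j$ is differentiable at $t_0$ with $\dot\varphi_j(t_0)=0$.
   Context: Sub-$\ell^\infty$ structure defined by smooth vector fields $X_1,\dots,X_k$ on a manifold $M$ (here $X_1=Y_1$, $X_2=Y_2$): an admissible trajectory is an absolutely continuous curve $\gamma:[0,T]\to M$ together with a measurable control $u=(u_1,\dots,u_k):[0,T]\to\mathbb{R}^k$ with $|u_i(t)|\le1$ for all $i$ and a.e. $t$, such that $\dot\gamma(t)=\sum_i u_i(t)X_i(\gamma(t))$ for a.e. $t$. An extremal pair is a pair $(\lambda,\gamma)$ where $\gamma$ is admissible with control $u$ and $\lambda:[0,T]\to T^*M$ is absolutely continuous with $\lambda(t)\in T^*_{\gamma(t)}M\setminus\{0\}$, such that, with $\mathcal H(\lambda,p,u)=\sum_i u_i\langle\lambda,X_i(p)\rangle$, in canonical coordinates $\dot\lambda=-\partial_p\mathcal H(\lambda,\gamma,u)$, $\dot\gamma=\partial_\lambda\mathcal H(\lambda,\gamma,u)$ a.e., and there is a constant $\lambda_0\ge0$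 with $\sum_iu_i(t)\langle\lambda(t),X_i(\gamma(t))\rangle=\sum_i|\langle\lambda(t),X_i(\gamma(t))\rangle|=\lambda_0$ for a.e. $t$; $\gamma$ is then an extremal trajectory and $\lambda$ an extremal lift. The switching functions are $\varphi_j(t)=\langle\lambda(t),X_j(\gamma(t))\rangle$. The restriction of an extremal pair to an open interval $I$ is a $\varphi_j$-singular arc if $\varphi_j\equiv0$ on $I$, and a regular arc if $\varphi_i(t)\ne0$ for all $t\in I$ and all $i$. *)

theory Defs
  imports "HOL-Analysis.Analysis"
begin

text \<open>Points of the manifold M = R^3 and covectors in canonical coordinates
  are both represented as triples; the pairing of a covector with a tangent
  vector is the inner product of the coordinate triples.\<close>

type_synonym R3 = "real \<times> real \<times> real"

definition ac_on :: "real set \<Rightarrow> (real \<Rightarrow> 'a::real_normed_vector) \<Rightarrow> bool" where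
  "ac_on S f \<longleftrightarrow>
     (\<forall>e>0. \<exists>d>0. \<forall>(n::nat) (a::nat \<Rightarrow> real) b.
        (\<forall>i<n. a i \<le> b i \<and> {a i..b i} \<subseteq> S) \<longrightarrow>
        (\<forall>i<n. \<forall>j<n. i \<noteq> j \<longrightarrow> b i \<le> a j \<or> b j \<le> a i) \<longrightarrow>
        (\<Sum>i<n. b i - a i) < d \<longrightarrow>
        (\<Sum>i<n. norm (f (b i) - f (a i))) < e)"

text \<open>A sub-l-infinity structure is given by vector fields X 1, ..., X k on R^3.
  Controls are functions u :: real => nat => real, with u t i the i-th component.\<close>

definition admissible ::
  "nat \<Rightarrow> (nat \<Rightarrow> R3 \<Rightarrow> R3) \<Rightarrow> real \<Rightarrow> (real \<Rightarrow> R3) \<Rightarrow> (real \<Rightarrow> nat \<Rightarrow> real) \<Rightarrow> bool" where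
  "admissible k X T \<gamma> u \<longleftrightarrow>
     0 \<le> T \<and> ac_on {0..T} \<gamma> \<and>
     (\<forall>i\<in>{1..k}. (\<lambda>t. u t i) \<in> borel_measurable (lebesgue_on {0..T})) \<and>
     (AE t in lborel. t \<in> {0..T} \<longrightarrow>
        (\<forall>i\<in>{1..k}. \<bar>u t i\<bar> \<le> 1) \<and>
        (\<gamma> has_vector_derivative (\<Sum>i=1..k. u t i *\<^sub>R X i (\<gamma> t))) (at t within {0..T}))"

definition ham :: "nat \<Rightarrow> (nat \<Rightarrow> R3 \<Rightarrow> R3) \<Rightarrow> R3 \<Rightarrow> R3 \<Rightarrow> (nat \<Rightarrow> real) \<Rightarrow> real" where
  "ham k X l p w = (\<Sum>i=1..k. w i * (l \<bullet> X i p))"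

text \<open>Extremal pair (lambda, gamma) with control u on [0,T].  The Hamiltonian
  equations in canonical coordinates are expressed via the gradients of H with
  respect to p and to lambda.\<close>

definition extremal_pair ::
  "nat \<Rightarrow> (nat \<Rightarrow> R3 \<Rightarrow> R3) \<Rightarrow> real \<Rightarrow> (real \<Rightarrow> R3) \<Rightarrow> (real \<Rightarrow> R3) \<Rightarrow> (real \<Rightarrow> nat \<Rightarrow> real) \<Rightarrow> bool" where
  "extremal_pair k X T lam \<gamma> u \<longleftrightarrow>
     admissible k X T \<gamma> u \<and>
     ac_on {0..T} lam \<and>
     (\<forall>t\<in>{0..T}. lam t \<noteq> 0) \<and>
     (AE t in lborel. t \<in> {0..T} \<longrightarrow>
        (\<exists>gp gl.
           ((\<lambda>p. ham k X (lam t) p (u t)) has_derivative (\<lambda>v. gp \<bullet> v)) (at (\<gamma> t)) \<and>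
           ((\<lambda>l. ham k X l (\<gamma> t) (u t)) has_derivative (\<lambda>v. gl \<bullet> v)) (at (lam t)) \<and>
           (lam has_vector_derivative (- gp)) (at t within {0..T}) \<and>
           (\<gamma> has_vector_derivative gl) (at t within {0..T}))) \<and>
     (\<exists>c0\<ge>0. AE t in lborel. t \<in> {0..T} \<longrightarrow>
        (\<Sum>i=1..k. u t i * (lam t \<bullet> X i (\<gamma> t))) = c0 \<and>
        (\<Sum>i=1..k. \<bar>lam t \<bullet> X i (\<gamma> t)\<bar>) = c0)"

definition switching :: "(nat \<Rightarrow> R3 \<Rightarrow> R3) \<Rightarrow> (real \<Rightarrow> R3) \<Rightarrow> (real \<Rightarrow> R3) \<Rightarrow> nat \<Rightarrow> real \<Rightarrow> real" where
  "switching X lam \<gamma> j t = lam t \<bullet> X j (\<gamma> t)"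

definition singular_arc ::
  "(nat \<Rightarrow> R3 \<Rightarrow> R3) \<Rightarrow> (real \<Rightarrow> R3) \<Rightarrow> (real \<Rightarrow> R3) \<Rightarrow> nat \<Rightarrow> real set \<Rightarrow> bool" where
  "singular_arc X lam \<gamma> j I \<longleftrightarrow> (\<forall>t\<in>I. switching X lam \<gamma> j t = 0)"

definition regular_arc ::
  "nat \<Rightarrow> (nat \<Rightarrow> R3 \<Rightarrow> R3) \<Rightarrow> (real \<Rightarrow> R3) \<Rightarrow> (real \<Rightarrow> R3) \<Rightarrow> real set \<Rightarrow> bool" where
  "regular_arc k X lam \<gamma> I \<longleftrightarrow> (\<forall>t\<in>I. \<forall>i\<in>{1..k}. switching X lam \<gamma> i t \<noteq> 0)"

definition Yfield :: "nat \<Rightarrow> R3 \<Rightarrow> R3" where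
  "Yfield i p = (case p of (x, y, z) \<Rightarrow>
     if i = 1 then (1, 1, y\<^sup>2) else if i = 2 then (1, -1, y\<^sup>2) else (0, 0, 0))"

end

theory Submission
  imports Defs
begin

text \<open>
  Write the covector as \<open>lam = (px, py, pz)\<close> and let \<open>y\<close> be the middle coordinate of the trajectory.
  Since \<open>H = (u1 + u2) (px + pz y\<^sup>2) + (u1 - u2) py\<close>, the Hamiltonian equations say that
  \<open>px\<close> and \<open>pz\<close> are constant, \<open>py' = -2 pz y (u1 + u2)\<close> and \<open>y' = u1 - u2\<close>, while
  \<open>\<phi>\<^sub>j = px \<plusminus> py + pz y\<^sup>2\<close>. These equations hold only almost everywhere, so they are
  integrated by a fundamental theorem of calculus for absolutely continuous functions.

  On the singular arc \<open>\<phi>\<^sub>j = 0\<close>, so the other switching function carries the whole value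
  \<open>c0 > 0\<close> of the Hamiltonian and its control does not vanish; differentiating \<open>\<phi>\<^sub>j\<close> then
  gives \<open>pz y = 0\<close>. Here \<open>pz \<noteq> 0\<close>, since otherwise \<open>py\<close> and hence \<open>\<phi>\<^sub>j\<close> would be constant,
  so \<open>y\<close> vanishes on the singular arc and at \<open>t0\<close>. On the regular arc both controls are constant
  signs. Equal signs would freeze \<open>y\<close> and \<open>py\<close> and make \<open>\<phi>\<^sub>j\<close> vanish identically, so
  \<open>u1 = -u2\<close>, \<open>py\<close> is constant, \<open>y = \<plusminus>2 (t - t0)\<close> and \<open>\<phi>\<^sub>j = 4 pz (t - t0)\<^sup>2\<close>.
  This quadratic bound on both sides of \<open>t0\<close> gives \<open>\<phi>\<^sub>j'(t0) = 0\<close>.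
\<close>

section \<open>Absolutely continuous functions\<close>

lemma ac_on_subset:
  assumes "ac_on S f" and "T \<subseteq> S"
  shows "ac_on T f"
  unfolding ac_on_def
proof (intro allI impI)
  fix e :: real assume "e > 0"
  then obtain d where "d > 0" and d: "\<forall>(n::nat) a b.
        (\<forall>i<n. a i \<le> b i \<and> {a i..b i} \<subseteq> S) \<longrightarrow>
        (\<forall>i<n. \<forall>j<n. i \<noteq> j \<longrightarrow> b i \<le> a j \<or> b j \<le> a i) \<longrightarrow>
        (\<Sum>i<n. b i - a i) < d \<longrightarrow> (\<Sum>i<n. norm (f (b i) - f (a i))) < e"
    using assms(1)[unfolded ac_on_def, rule_format, OF \<open>e > 0\<close>] by blast
  show "\<exists>d>0. \<forall>(n::nat) a b.
        (\<forall>i<n. a i \<le> b i \<and> {a i..b i} \<subseteq> T) \<longrightarrow>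
        (\<forall>i<n. \<forall>j<n. i \<noteq> j \<longrightarrow> b i \<le> a j \<or> b j \<le> a i) \<longrightarrow>
        (\<Sum>i<n. b i - a i) < d \<longrightarrow> (\<Sum>i<n. norm (f (b i) - f (a i))) < e"
  proof (intro exI[of _ d] conjI allI impI \<open>d > 0\<close>)
    fix n :: nat and a b :: "nat \<Rightarrow> real"
    assume "\<forall>i<n. a i \<le> b i \<and> {a i..b i} \<subseteq> T"
    then have "\<forall>i<n. a i \<le> b i \<and> {a i..b i} \<subseteq> S" using assms(2) by blast
    then show "\<forall>i<n. \<forall>j<n. i \<noteq> j \<longrightarrow> b i \<le> a j \<or> b j \<le> a i \<Longrightarrow>
        (\<Sum>i<n. b i - a i) < d \<Longrightarrow> (\<Sum>i<n. norm (f (b i) - f (a i))) < e"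
      using d by blast
  qed
qed

lemma ac_on_compose_lipschitz:
  assumes f: "ac_on S f" and g: "C-lipschitz_on (f ` S) g"
  shows "ac_on S (\<lambda>t. g (f t))"
  unfolding ac_on_def
proof (intro allI impI)
  fix e :: real assume "e > 0"
  have "C \<ge> 0" using g by (rule lipschitz_on_nonneg)
  with \<open>e > 0\<close> have "e / (C + 1) > 0" by simp
  then obtain d where "d > 0" and d: "\<forall>(n::nat) a b.
        (\<forall>i<n. a i \<le> b i \<and> {a i..b i} \<subseteq> S) \<longrightarrow>
        (\<forall>i<n. \<forall>j<n. i \<noteq> j \<longrightarrow> b i \<le> a j \<or> b j \<le> a i) \<longrightarrow>
        (\<Sum>i<n. b i - a i) < d \<longrightarrow> (\<Sum>i<n. norm (f (b i) - f (a i))) < e / (C + 1)"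
    using f[unfolded ac_on_def, rule_format] by blast
  show "\<exists>d>0. \<forall>(n::nat) a b.
        (\<forall>i<n. a i \<le> b i \<and> {a i..b i} \<subseteq> S) \<longrightarrow>
        (\<forall>i<n. \<forall>j<n. i \<noteq> j \<longrightarrow> b i \<le> a j \<or> b j \<le> a i) \<longrightarrow>
        (\<Sum>i<n. b i - a i) < d \<longrightarrow> (\<Sum>i<n. norm (g (f (b i)) - g (f (a i)))) < e"
  proof (intro exI[of _ d] conjI allI impI \<open>d > 0\<close>)
    fix n :: nat and a b :: "nat \<Rightarrow> real"
    assume intervals: "\<forall>i<n. a i \<le> b i \<and> {a i..b i} \<subseteq> S"
      and "\<forall>i<n. \<forall>j<n. i \<noteq> j \<longrightarrow> b i \<le> a j \<or> b j \<le> a i" and "(\<Sum>i<n. b i - a i) < d"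
    then have small: "(\<Sum>i<n. norm (f (b i) - f (a i))) < e / (C + 1)"
      using d by blast
    have "(\<Sum>i<n. norm (g (f (b i)) - g (f (a i)))) \<le> (\<Sum>i<n. C * norm (f (b i) - f (a i)))"
      using intervals by (intro sum_mono lipschitz_on_normD[OF g]) force+
    also have "\<dots> = C * (\<Sum>i<n. norm (f (b i) - f (a i)))"
      by (simp add: sum_distrib_left)
    also have "\<dots> \<le> C * (e / (C + 1))"
      using small \<open>C \<ge> 0\<close> by (intro mult_left_mono) auto
    also have "\<dots> < e"
      using \<open>e > 0\<close> \<open>C \<ge> 0\<close> by (simp add: field_simps)
    finally show "(\<Sum>i<n. norm (g (f (b i)) - g (f (a i)))) < e" .
  qed
qed

lemma ac_on_id: "ac_on S (\<lambda>t. t)"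
  unfolding ac_on_def
proof (intro allI impI)
  fix e :: real assume "e > 0"
  have "(\<Sum>i<n. norm (b i - a i)) = (\<Sum>i<n. b i - a i)" if "\<forall>i<n. a i \<le> b i \<and> {a i..b i} \<subseteq> S"
    for n :: nat and a b :: "nat \<Rightarrow> real"
    using that by (intro sum.cong) auto
  with \<open>e > 0\<close> show "\<exists>d>0. \<forall>(n::nat) a b.
        (\<forall>i<n. a i \<le> b i \<and> {a i..b i} \<subseteq> S) \<longrightarrow>
        (\<forall>i<n. \<forall>j<n. i \<noteq> j \<longrightarrow> b i \<le> a j \<or> b j \<le> a i) \<longrightarrow>
        (\<Sum>i<n. b i - a i) < d \<longrightarrow> (\<Sum>i<n. norm (b i - a i)) < e"
    by auto
qed

lemma lipschitz_on_imp_ac_on: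
  assumes "C-lipschitz_on S f"
  shows "ac_on S f"
  using ac_on_compose_lipschitz[OF ac_on_id, where g = f] assms by simp

lemma ac_on_diff:
  fixes f g :: "real \<Rightarrow> 'a::real_normed_vector"
  assumes f: "ac_on S f" and g: "ac_on S g"
  shows "ac_on S (\<lambda>t. f t - g t)"
  unfolding ac_on_def
proof (intro allI impI)
  fix e :: real assume "e > 0"
  then have "e / 2 > 0" by simp
  obtain d1 where "d1 > 0" and d1: "\<forall>(n::nat) a b.
        (\<forall>i<n. a i \<le> b i \<and> {a i..b i} \<subseteq> S) \<longrightarrow>
        (\<forall>i<n. \<forall>j<n. i \<noteq> j \<longrightarrow> b i \<le> a j \<or> b j \<le> a i) \<longrightarrow>
        (\<Sum>i<n. b i - a i) < d1 \<longrightarrow> (\<Sum>i<n. norm (f (b i) - f (a i))) < e / 2"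
    using f[unfolded ac_on_def, rule_format, OF \<open>e / 2 > 0\<close>] by blast
  obtain d2 where "d2 > 0" and d2: "\<forall>(n::nat) a b.
        (\<forall>i<n. a i \<le> b i \<and> {a i..b i} \<subseteq> S) \<longrightarrow>
        (\<forall>i<n. \<forall>j<n. i \<noteq> j \<longrightarrow> b i \<le> a j \<or> b j \<le> a i) \<longrightarrow>
        (\<Sum>i<n. b i - a i) < d2 \<longrightarrow> (\<Sum>i<n. norm (g (b i) - g (a i))) < e / 2"
    using g[unfolded ac_on_def, rule_format, OF \<open>e / 2 > 0\<close>] by blast
  show "\<exists>d>0. \<forall>(n::nat) a b.
        (\<forall>i<n. a i \<le> b i \<and> {a i..b i} \<subseteq> S) \<longrightarrow>
        (\<forall>i<n. \<forall>j<n. i \<noteq> j \<longrightarrow> b i \<le> a j \<or> b j \<le> a i) \<longrightarrow>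
        (\<Sum>i<n. b i - a i) < d \<longrightarrow> (\<Sum>i<n. norm (f (b i) - g (b i) - (f (a i) - g (a i)))) < e"
  proof (intro exI[of _ "min d1 d2"] conjI allI impI)
    show "min d1 d2 > 0" using \<open>d1 > 0\<close> \<open>d2 > 0\<close> by simp
    fix n :: nat and a b :: "nat \<Rightarrow> real"
    assume intervals: "\<forall>i<n. a i \<le> b i \<and> {a i..b i} \<subseteq> S"
      and disjoint: "\<forall>i<n. \<forall>j<n. i \<noteq> j \<longrightarrow> b i \<le> a j \<or> b j \<le> a i"
      and length: "(\<Sum>i<n. b i - a i) < min d1 d2"
    have "(\<Sum>i<n. norm (f (b i) - f (a i))) < e / 2"
      using d1 intervals disjoint length by auto
    moreover have "(\<Sum>i<n. norm (g (b i) - g (a i))) < e / 2"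
      using d2 intervals disjoint length by auto
    moreover have "(\<Sum>i<n. norm (f (b i) - g (b i) - (f (a i) - g (a i))))
        \<le> (\<Sum>i<n. norm (f (b i) - f (a i))) + (\<Sum>i<n. norm (g (b i) - g (a i)))"
      unfolding sum.distrib[symmetric]
    proof (rule sum_mono)
      fix i
      show "norm (f (b i) - g (b i) - (f (a i) - g (a i)))
          \<le> norm (f (b i) - f (a i)) + norm (g (b i) - g (a i))"
        using norm_triangle_ineq4[of "f (b i) - f (a i)" "g (b i) - g (a i)"]
        by (simp add: algebra_simps)
    qed
    ultimately show "(\<Sum>i<n. norm (f (b i) - g (b i) - (f (a i) - g (a i)))) < e"
      by linarith
  qed
qed

lemma ac_on_fst: "ac_on S f \<Longrightarrow> ac_on S (\<lambda>t. fst (f t))"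
  by (erule ac_on_compose_lipschitz[where C = 1]) (intro lipschitz_onI; simp add: dist_fst_le)

lemma ac_on_snd: "ac_on S f \<Longrightarrow> ac_on S (\<lambda>t. snd (f t))"
  by (erule ac_on_compose_lipschitz[where C = 1]) (intro lipschitz_onI; simp add: dist_snd_le)

lemma ac_on_imp_continuous_on:
  assumes "ac_on {a..b} f"
  shows "continuous_on {a..b} f"
  unfolding continuous_on_iff
proof (intro ballI allI impI)
  fix x e :: real assume x: "x \<in> {a..b}" and "e > 0"
  then obtain d where "d > 0" and d: "\<forall>(n::nat) a' b'.
        (\<forall>i<n. a' i \<le> b' i \<and> {a' i..b' i} \<subseteq> {a..b}) \<longrightarrow>
        (\<forall>i<n. \<forall>j<n. i \<noteq> j \<longrightarrow> b' i \<le> a' j \<or> b' j \<le> a' i) \<longrightarrow>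
        (\<Sum>i<n. b' i - a' i) < d \<longrightarrow> (\<Sum>i<n. norm (f (b' i) - f (a' i))) < e"
    using assms unfolding ac_on_def by blast
  have "dist (f y) (f x) < e" if "y \<in> {a..b}" "dist y x < d" for y
    using d[rule_format, of 1 "\<lambda>_. min x y" "\<lambda>_. max x y"] x that
    by (cases "x \<le> y") (auto simp: dist_norm norm_minus_commute)
  with \<open>d > 0\<close> show "\<exists>d>0. \<forall>y\<in>{a..b}. dist y x < d \<longrightarrow> dist (f y) (f x) < e"
    by blast
qed

lemma ac_on_finite_family:
  assumes "ac_on S f" and "e > 0"
  shows "\<exists>d>0. \<forall>(A :: 'i set) a b. finite A \<longrightarrow> (\<forall>i\<in>A. a i \<le> b i \<and> {a i..b i} \<subseteq> S) \<longrightarrow>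
           (\<forall>i\<in>A. \<forall>j\<in>A. i \<noteq> j \<longrightarrow> b i \<le> a j \<or> b j \<le> a i) \<longrightarrow>
           (\<Sum>i\<in>A. b i - a i) < d \<longrightarrow> (\<Sum>i\<in>A. norm (f (b i) - f (a i))) < e"
proof -
  obtain d where "d > 0" and d: "\<forall>(n::nat) a b.
        (\<forall>i<n. a i \<le> b i \<and> {a i..b i} \<subseteq> S) \<longrightarrow>
        (\<forall>i<n. \<forall>j<n. i \<noteq> j \<longrightarrow> b i \<le> a j \<or> b j \<le> a i) \<longrightarrow>
        (\<Sum>i<n. b i - a i) < d \<longrightarrow> (\<Sum>i<n. norm (f (b i) - f (a i))) < e"
    using assms unfolding ac_on_def by blast
  have "(\<Sum>i\<in>A. norm (f (b i) - f (a i))) < e"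
    if "finite A" "\<forall>i\<in>A. a i \<le> b i \<and> {a i..b i} \<subseteq> S"
      "\<forall>i\<in>A. \<forall>j\<in>A. i \<noteq> j \<longrightarrow> b i \<le> a j \<or> b j \<le> a i" "(\<Sum>i\<in>A. b i - a i) < d"
    for A :: "'i set" and a b
  proof -
    obtain h where h: "bij_betw h {..<card A} A"
      using ex_bij_betw_nat_finite[OF \<open>finite A\<close>] by (auto simp: atLeast0LessThan)
    have "(\<Sum>i<card A. b (h i) - a (h i)) = (\<Sum>i\<in>A. b i - a i)"
      by (rule sum.reindex_bij_betw[OF h])
    moreover have "(\<Sum>i<card A. norm (f (b (h i)) - f (a (h i)))) = (\<Sum>i\<in>A. norm (f (b i) - f (a i)))"
      by (rule sum.reindex_bij_betw[OF h])
    moreover have "h i \<noteq> h j" if "i < card A" "j < card A" "i \<noteq> j" for i j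
      using that bij_betw_imp_inj_on[OF h] by (auto simp: inj_on_eq_iff)
    ultimately show ?thesis
      using d[rule_format, of "card A" "a \<circ> h" "b \<circ> h"] that(2-4) bij_betwE[OF h] by auto
  qed
  with \<open>d > 0\<close> show ?thesis by blast
qed

lemma tagged_division_of_real_intervalD:
  fixes a b :: real
  assumes "p tagged_division_of {a..b}" and "(x, K) \<in> p"
  shows "K = {Inf K..Sup K}" "Inf K \<le> Sup K" "x \<in> K" "K \<subseteq> {a..b}"
proof -
  obtain u v where "K = cbox u v"
    using tagged_division_ofD(4)[OF assms] by blast
  moreover have "x \<in> K" "K \<subseteq> {a..b}"
    using tagged_division_ofD(2,3)[OF assms] by auto
  ultimately show "K = {Inf K..Sup K}" "Inf K \<le> Sup K" "x \<in> K" "K \<subseteq> {a..b}"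
    by auto
qed

lemma tagged_division_of_real_nonoverlapping:
  fixes a b :: real
  assumes p: "p tagged_division_of {a..b}"
    and xK: "(x, K) \<in> p" and yL: "(y, L) \<in> p" and "(x, K) \<noteq> (y, L)"
    and "Inf K < Sup K" "Inf L < Sup L"
  shows "Sup K \<le> Inf L \<or> Sup L \<le> Inf K"
proof (rule ccontr)
  assume overlap: "\<not> ?thesis"
  define m where "m = (max (Inf K) (Inf L) + min (Sup K) (Sup L)) / 2"
  have "interior K = {Inf K<..<Sup K}" "interior L = {Inf L<..<Sup L}"
    using tagged_division_of_real_intervalD(1)[OF p xK] tagged_division_of_real_intervalD(1)[OF p yL]
    by (metis interior_atLeastAtMost_real)+
  then have "m \<in> interior K \<inter> interior L"
    using overlap assms(5,6) by (auto simp: m_def)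
  with tagged_division_ofD(5)[OF assms(1-4)] show False by blast
qed

lemma tagged_division_of_real_content_indicator:
  fixes a b :: real
  assumes p: "p tagged_division_of {a..b}"
  shows "(\<Sum>(x, K)\<in>p. Henstock_Kurzweil_Integration.content K * indicat_real N x) = (\<Sum>(x, K)\<in>{(x, K) \<in> p. x \<in> N}. Sup K - Inf K)"
proof -
  have "finite p" using p by blast
  have "Henstock_Kurzweil_Integration.content K = Sup K - Inf K" if "(x, K) \<in> p" for x K
    using tagged_division_of_real_intervalD(1,2)[OF p that] by (metis content_real)
  then show ?thesis
    using sum.inter_filter[OF \<open>finite p\<close>, of "\<lambda>(x, K). Sup K - Inf K" "\<lambda>(x, K). x \<in> N"]
    by (auto simp: case_prod_unfold indicator_def intro!: sum.cong)
qed

text \<open>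
  The gauge comes from \<open>\<integral> 1\<^sub>N = 0\<close>: the nondegenerate intervals tagged in \<open>N\<close> have
  total length below any \<open>d\<close>, and absolute continuity turns this into a small total increment.
\<close>

lemma negligible_tags_gauge:
  fixes f :: "real \<Rightarrow> 'a::real_normed_vector"
  assumes ac: "ac_on {a..b} f" and "negligible N" and "e > 0"
  obtains \<gamma> where "gauge \<gamma>"
    and "\<And>p. p tagged_division_of {a..b} \<Longrightarrow> \<gamma> fine p \<Longrightarrow>
           (\<Sum>(x, K)\<in>{(x, K) \<in> p. x \<in> N}. norm (f (Sup K) - f (Inf K))) < e"
proof -
  obtain d where "d > 0"
    and d: "\<forall>(A :: (real \<times> real set) set) l r. finite A \<longrightarrow>
           (\<forall>i\<in>A. l i \<le> r i \<and> {l i..r i} \<subseteq> {a..b}) \<longrightarrow>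
           (\<forall>i\<in>A. \<forall>j\<in>A. i \<noteq> j \<longrightarrow> r i \<le> l j \<or> r j \<le> l i) \<longrightarrow>
           (\<Sum>i\<in>A. r i - l i) < d \<longrightarrow> (\<Sum>i\<in>A. norm (f (r i) - f (l i))) < e"
    using ac_on_finite_family[OF ac \<open>e > 0\<close>] by blast
  have "(indicat_real N has_integral 0) (cbox a b)"
    using \<open>negligible N\<close> unfolding negligible_def by blast
  then obtain \<gamma> where "gauge \<gamma>" and \<gamma>: "\<And>p. p tagged_division_of cbox a b \<Longrightarrow> \<gamma> fine p \<Longrightarrow>
      norm ((\<Sum>(x, K)\<in>p. Henstock_Kurzweil_Integration.content K *\<^sub>R indicat_real N x) - 0) < d"
    unfolding has_integral using \<open>d > 0\<close> by meson
  show thesis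
  proof (rule that[OF \<open>gauge \<gamma>\<close>])
    fix p assume p: "p tagged_division_of {a..b}" and fine: "\<gamma> fine p"
    have "finite p" using p by blast
    define P where "P = {(x, K) \<in> p. x \<in> N \<and> Inf K < Sup K}"
    have "finite P" unfolding P_def by (rule finite_subset[OF _ \<open>finite p\<close>]) auto
    have "(\<Sum>(x, K)\<in>{(x, K) \<in> p. x \<in> N}. norm (f (Sup K) - f (Inf K)))
        = (\<Sum>i\<in>P. norm (f (Sup (snd i)) - f (Inf (snd i))))"
      unfolding case_prod_beta using \<open>finite p\<close> tagged_division_of_real_intervalD(2)[OF p]
      by (intro sum.mono_neutral_right)
        (auto simp: P_def less_le intro: finite_subset[OF _ \<open>finite p\<close>])
    also have "\<dots> < e"
    proof (rule d[rule_format (no_asm), of P "\<lambda>i. Inf (snd i)" "\<lambda>i. Sup (snd i)"])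
      show "finite P" by fact
      show "\<forall>i\<in>P. Inf (snd i) \<le> Sup (snd i) \<and> {Inf (snd i)..Sup (snd i)} \<subseteq> {a..b}"
        using tagged_division_of_real_intervalD(1,2,4)[OF p] by (force simp: P_def)
      show "\<forall>i\<in>P. \<forall>j\<in>P. i \<noteq> j \<longrightarrow> Sup (snd i) \<le> Inf (snd j) \<or> Sup (snd j) \<le> Inf (snd i)"
        using tagged_division_of_real_nonoverlapping[OF p] by (force simp: P_def)
      have "(\<Sum>i\<in>P. Sup (snd i) - Inf (snd i)) \<le> (\<Sum>(x, K)\<in>{(x, K) \<in> p. x \<in> N}. Sup K - Inf K)"
        unfolding case_prod_beta using \<open>finite p\<close> tagged_division_of_real_intervalD(2)[OF p]
        by (intro sum_mono2) (auto simp: P_def)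
      also have "\<dots> = (\<Sum>(x, K)\<in>p. Henstock_Kurzweil_Integration.content K * indicat_real N x)"
        by (rule tagged_division_of_real_content_indicator[OF p, symmetric])
      also have "\<dots> < d"
        using \<gamma>[OF p[folded box_real(2)] fine] by (simp add: case_prod_unfold)
      finally show "(\<Sum>i\<in>P. Sup (snd i) - Inf (snd i)) < d" .
    qed
    finally show "(\<Sum>(x, K)\<in>{(x, K) \<in> p. x \<in> N}. norm (f (Sup K) - f (Inf K))) < e" .
  qed
qed

lemma interval_increment_le_content:
  fixes f :: "real \<Rightarrow> 'a::real_normed_vector"
  assumes "x \<in> {u..v}" and near: "\<And>y. y \<in> {u..v} \<Longrightarrow> norm (f y - f x) \<le> e * \<bar>y - x\<bar>"
  shows "norm (f v - f u) \<le> e * Henstock_Kurzweil_Integration.content {u..v}"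
proof -
  have "norm (f v - f x) \<le> e * (v - x)" "norm (f u - f x) \<le> e * (x - u)"
    using near[of u] near[of v] assms(1) by auto
  then have "norm (f v - f u) \<le> e * (v - u)"
    using norm_triangle_ineq4[of "f v - f x" "f u - f x"] by (simp add: algebra_simps)
  with assms(1) show ?thesis by simp
qed

lemma has_vector_derivative_zero_local_bound:
  fixes f :: "real \<Rightarrow> 'a::real_normed_vector"
  assumes "(f has_vector_derivative 0) (at t within S)" and "e > 0"
  shows "\<exists>r>0. \<forall>y\<in>S. \<bar>y - t\<bar> < r \<longrightarrow> norm (f y - f t) \<le> e * \<bar>y - t\<bar>"
proof -
  have "(f has_derivative (\<lambda>_. 0)) (at t within S)"
    using assms(1) by (simp add: has_vector_derivative_def)
  then show ?thesis
    using \<open>e > 0\<close> unfolding has_derivative_within_alt by (simp add: dist_norm)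
qed

lemma derivative_zero_tags_gauge:
  fixes f :: "real \<Rightarrow> 'a::real_normed_vector"
  assumes "a \<le> b" and "e > 0"
    and deriv: "\<And>t. t \<in> {a..b} - N \<Longrightarrow> (f has_vector_derivative 0) (at t within {a..b})"
  obtains \<gamma> where "gauge \<gamma>"
    and "\<And>p. p tagged_division_of {a..b} \<Longrightarrow> \<gamma> fine p \<Longrightarrow>
           (\<Sum>(x, K)\<in>{(x, K) \<in> p. x \<notin> N}. norm (f (Sup K) - f (Inf K))) \<le> e * (b - a)"
proof -
  obtain r where r: "\<And>t. t \<in> {a..b} - N \<Longrightarrow>
      r t > 0 \<and> (\<forall>y\<in>{a..b}. \<bar>y - t\<bar> < r t \<longrightarrow> norm (f y - f t) \<le> e * \<bar>y - t\<bar>)"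
    using has_vector_derivative_zero_local_bound[OF deriv \<open>e > 0\<close>] by metis
  define \<gamma> where "\<gamma> t = ball t (if t \<in> {a..b} - N then r t else 1)" for t
  have "gauge \<gamma>"
    unfolding \<gamma>_def using r by (intro gauge_ball_dependent) auto
  show thesis
  proof (rule that[OF \<open>gauge \<gamma>\<close>])
    fix p assume p: "p tagged_division_of {a..b}" and fine: "\<gamma> fine p"
    have "finite p" using p by blast
    have bound: "norm (f (Sup K) - f (Inf K)) \<le> e * Henstock_Kurzweil_Integration.content K"
      if "(x, K) \<in> p" "x \<notin> N" for x K
    proof -
      have x: "x \<in> {a..b} - N" "x \<in> K" and K: "K = {Inf K..Sup K}" "K \<subseteq> {a..b}"
        using tagged_division_of_real_intervalD[OF p that(1)] that(2) by auto
      have "K \<subseteq> \<gamma> x"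
        using fine that(1) unfolding fine_def by blast
      then have "K \<subseteq> ball x (r x)"
        using x(1) by (simp add: \<gamma>_def)
      then have "norm (f y - f x) \<le> e * \<bar>y - x\<bar>" if "y \<in> K" for y
        using r[OF x(1)] that K(2) by (force simp: dist_real_def abs_minus_commute)
      with x(2) K(1) show ?thesis
        by (metis interval_increment_le_content)
    qed
    have "(\<Sum>(x, K)\<in>{(x, K) \<in> p. x \<notin> N}. norm (f (Sup K) - f (Inf K)))
        \<le> (\<Sum>(x, K)\<in>{(x, K) \<in> p. x \<notin> N}. e * Henstock_Kurzweil_Integration.content K)"
      using bound by (intro sum_mono) auto
    also have "\<dots> \<le> (\<Sum>(x, K)\<in>p. e * Henstock_Kurzweil_Integration.content K)"
      using \<open>finite p\<close> \<open>e > 0\<close> by (intro sum_mono2) auto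
    also have "\<dots> = e * (b - a)"
      using additive_content_tagged_division[OF p[folded box_real(2)]] \<open>a \<le> b\<close>
      by (simp add: sum_distrib_left[symmetric] case_prod_unfold)
    finally show "(\<Sum>(x, K)\<in>{(x, K) \<in> p. x \<notin> N}. norm (f (Sup K) - f (Inf K))) \<le> e * (b - a)" .
  qed
qed

lemma ac_on_increment_le:
  fixes f :: "real \<Rightarrow> 'a::real_normed_vector"
  assumes ac: "ac_on {a..b} f" and "a \<le> b" and N: "negligible N" and "e > 0"
    and deriv: "\<And>t. t \<in> {a..b} - N \<Longrightarrow> (f has_vector_derivative 0) (at t within {a..b})"
  shows "norm (f b - f a) \<le> e * (b - a) + e"
proof -
  obtain \<gamma>1 where "gauge \<gamma>1" and \<gamma>1: "\<And>p. p tagged_division_of {a..b} \<Longrightarrow> \<gamma>1 fine p \<Longrightarrow>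
      (\<Sum>(x, K)\<in>{(x, K) \<in> p. x \<in> N}. norm (f (Sup K) - f (Inf K))) < e"
    using negligible_tags_gauge[OF ac N \<open>e > 0\<close>] by blast
  obtain \<gamma>2 where "gauge \<gamma>2" and \<gamma>2: "\<And>p. p tagged_division_of {a..b} \<Longrightarrow> \<gamma>2 fine p \<Longrightarrow>
      (\<Sum>(x, K)\<in>{(x, K) \<in> p. x \<notin> N}. norm (f (Sup K) - f (Inf K))) \<le> e * (b - a)"
    using derivative_zero_tags_gauge[OF \<open>a \<le> b\<close> \<open>e > 0\<close> deriv] by blast
  obtain p where p: "p tagged_division_of {a..b}" and fine: "(\<lambda>x. \<gamma>1 x \<inter> \<gamma>2 x) fine p"
    using fine_division_exists_real[OF gauge_Int[OF \<open>gauge \<gamma>1\<close> \<open>gauge \<gamma>2\<close>]] by blast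
  have "finite p" using p by blast
  define P where "P = {(x, K) \<in> p. x \<in> N}"
  have "p \<inter> P = P" by (auto simp: P_def)
  have "f b - f a = (\<Sum>(x, K)\<in>p. f (Sup K) - f (Inf K))"
    using additive_tagged_division_1[OF \<open>a \<le> b\<close> p, where f = f] by simp
  also have "\<dots> = (\<Sum>(x, K)\<in>P. f (Sup K) - f (Inf K)) + (\<Sum>(x, K)\<in>p - P. f (Sup K) - f (Inf K))"
    using \<open>finite p\<close> \<open>p \<inter> P = P\<close> sum.Int_Diff[of p _ P] by simp
  finally have "norm (f b - f a)
      \<le> norm (\<Sum>(x, K)\<in>P. f (Sup K) - f (Inf K)) + norm (\<Sum>(x, K)\<in>p - P. f (Sup K) - f (Inf K))"
    by (simp add: norm_triangle_ineq)
  also have "\<dots> \<le> (\<Sum>(x, K)\<in>P. norm (f (Sup K) - f (Inf K))) + (\<Sum>(x, K)\<in>p - P. norm (f (Sup K) - f (Inf K)))"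
    unfolding case_prod_unfold by (intro add_mono norm_sum)
  finally have "norm (f b - f a) \<le>
      (\<Sum>(x, K)\<in>P. norm (f (Sup K) - f (Inf K))) + (\<Sum>(x, K)\<in>p - P. norm (f (Sup K) - f (Inf K)))" .
  moreover have "\<gamma>1 fine p" "\<gamma>2 fine p"
    using fine by (auto simp: fine_Int)
  moreover have "p - P = {(x, K) \<in> p. x \<notin> N}"
    by (auto simp: P_def)
  ultimately show ?thesis
    using \<gamma>1[OF p] \<gamma>2[OF p] unfolding P_def by fastforce
qed

theorem ac_on_vector_derivative_zero_imp_constant:
  fixes f :: "real \<Rightarrow> 'a::real_normed_vector"
  assumes ac: "ac_on {a..b} f" and "a \<le> b" and N: "negligible N"
    and deriv: "\<And>t. t \<in> {a..b} - N \<Longrightarrow> (f has_vector_derivative 0) (at t within {a..b})"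
  shows "f b = f a"
proof -
  have "norm (f b - f a) \<le> 0"
  proof (rule field_le_epsilon)
    fix e :: real assume "e > 0"
    then have "norm (f b - f a) \<le> e / (b - a + 1) * (b - a) + e / (b - a + 1)"
      using \<open>a \<le> b\<close> by (intro ac_on_increment_le[OF ac \<open>a \<le> b\<close> N _ deriv]) simp
    also have "\<dots> = e / (b - a + 1) * (b - a + 1)"
      by (simp add: distrib_left)
    also have "\<dots> = e"
      using \<open>a \<le> b\<close> by simp
    finally show "norm (f b - f a) \<le> 0 + e" by simp
  qed
  then show ?thesis by simp
qed

lemma ac_on_has_real_derivative_ae_imp_affine:
  fixes f :: "real \<Rightarrow> real"
  assumes ac: "ac_on {a..b} f" and N: "negligible N"
    and deriv: "\<And>t. t \<in> {a<..<b} - N \<Longrightarrow> (f has_real_derivative c) (at t)"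
    and "s \<in> {a..b}" "t \<in> {a..b}"
  shows "f t = f s + c * (t - s)"
proof -
  have affine: "f v = f u + c * (v - u)" if "u \<in> {a..b}" "v \<in> {a..b}" "u \<le> v" for u v
  proof -
    have "ac_on {u..v} f"
      using that by (auto intro: ac_on_subset[OF ac])
    moreover have "ac_on {u..v} (\<lambda>t. c * t)"
      using lipschitz_on_cmult_real[OF lipschitz_on_id] by (rule lipschitz_on_imp_ac_on)
    ultimately have "ac_on {u..v} (\<lambda>t. f t - c * t)"
      by (rule ac_on_diff)
    then have "f v - c * v = f u - c * u"
    proof (rule ac_on_vector_derivative_zero_imp_constant[where N = "N \<union> {a, b}"])
      show "u \<le> v" "negligible (N \<union> {a, b})" using \<open>u \<le> v\<close> N by auto
      fix t assume "t \<in> {u..v} - (N \<union> {a, b})"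
      then have "t \<in> {a<..<b} - N" using that by auto
      then have "(f has_real_derivative c) (at t within {u..v})"
        by (rule has_field_derivative_at_within[OF deriv])
      then have "((\<lambda>t. f t - c * t) has_real_derivative c - c * 1) (at t within {u..v})"
        by (rule DERIV_diff[OF _ DERIV_cmult[OF DERIV_ident]])
      then show "((\<lambda>t. f t - c * t) has_vector_derivative 0) (at t within {u..v})"
        by (simp add: has_real_derivative_iff_has_vector_derivative)
    qed
    then show ?thesis by (simp add: algebra_simps)
  qed
  show ?thesis
    using affine[of s t] affine[of t s] assms(4,5) by (cases "s \<le> t") (auto simp: algebra_simps)
qed

section \<open>Negligible sets\<close>

lemma continuous_on_zero_ae_imp_zero:
  fixes f :: "real \<Rightarrow> 'a::real_normed_vector"
  assumes cont: "continuous_on {a..b} f" and "a < b" and N: "negligible N"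
    and zero: "\<And>t. t \<in> {a<..<b} - N \<Longrightarrow> f t = 0" and "t \<in> {a..b}"
  shows "f t = 0"
proof -
  have "f t = 0" if "t \<in> {a<..<b}" for t
  proof (rule ccontr)
    assume "f t \<noteq> 0"
    have "continuous_on {a<..<b} f"
      using cont by (rule continuous_on_subset) auto
    then have "open ({a<..<b} \<inter> f -` (- {0}))"
      by (intro continuous_open_preimage) auto
    moreover have "{a<..<b} \<inter> f -` (- {0}) \<noteq> {}" "{a<..<b} \<inter> f -` (- {0}) \<subseteq> N"
      using that \<open>f t \<noteq> 0\<close> zero by auto
    ultimately show False
      using open_not_negligible negligible_subset[OF N] by blast
  qed
  then have "{a<..<b} \<subseteq> {x \<in> {a..b}. f x = 0}" by auto
  moreover have "closed {x \<in> {a..b}. f x = 0}"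
    using cont by (rule continuous_closed_preimage_constant) simp
  ultimately have "closure {a<..<b} \<subseteq> {x \<in> {a..b}. f x = 0}"
    by (rule closure_minimal)
  then show ?thesis using \<open>a < b\<close> \<open>t \<in> {a..b}\<close> by auto
qed

lemma greaterThanLessThan_diff_negligible_nonempty:
  fixes a b :: real
  assumes "a < b" and "negligible N"
  obtains t where "t \<in> {a<..<b} - N"
proof -
  have "\<not> {a<..<b} \<subseteq> N"
    using assms open_not_negligible[of "{a<..<b}"] negligible_subset by auto
  then show thesis using that by blast
qed

lemma AE_lborel_negligible_exception:
  assumes "AE t in lborel. P t"
  obtains N where "negligible N" and "\<And>t. t \<notin> N \<Longrightarrow> P t"
proof -
  obtain N where N: "{t \<in> space lborel. \<not> P t} \<subseteq> N" "emeasure lborel N = 0" "N \<in> sets lborel"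
    using assms by (rule AE_E)
  then have "negligible N"
    by (simp add: negligible_iff_null_sets null_sets_completionI null_setsI)
  with N(1) show thesis using that by auto
qed

section \<open>Extremals of the Y-field structure\<close>

lemma has_vector_derivative_fst:
  "(f has_vector_derivative v) F \<Longrightarrow> ((\<lambda>t. fst (f t)) has_vector_derivative fst v) F"
  unfolding has_vector_derivative_def by (drule has_derivative_fst) simp

lemma has_vector_derivative_snd:
  "(f has_vector_derivative v) F \<Longrightarrow> ((\<lambda>t. snd (f t)) has_vector_derivative snd v) F"
  unfolding has_vector_derivative_def by (drule has_derivative_snd) simp

lemma maximizing_control_eq_sgn:
  fixes u1 u2 a b :: real
  assumes "\<bar>u1\<bar> \<le> 1" "\<bar>u2\<bar> \<le> 1" "u1 * a + u2 * b = \<bar>a\<bar> + \<bar>b\<bar>" "a \<noteq> 0"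
  shows "u1 = sgn a"
proof -
  have "u1 * a \<le> \<bar>a\<bar>" "u2 * b \<le> \<bar>b\<bar>"
    using assms(1,2) abs_ge_self[of "u1 * a"] abs_ge_self[of "u2 * b"]
      mult_right_mono[of "\<bar>u1\<bar>" 1 "\<bar>a\<bar>"] mult_right_mono[of "\<bar>u2\<bar>" 1 "\<bar>b\<bar>"]
    by (auto simp: abs_mult)
  with assms(3) have "u1 * a = \<bar>a\<bar>"
    by linarith
  then have "u1 * a = sgn a * a"
    by (simp add: abs_sgn mult.commute)
  with assms(4) show ?thesis by simp
qed

definition Yfield_sign :: "nat \<Rightarrow> real" where
  "Yfield_sign j = (if j = 1 then 1 else -1)"

lemma switching_Yfield:
  assumes "j \<in> {1, 2}"
  shows "switching Yfield lam \<gamma> j t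
    = fst (lam t) + Yfield_sign j * fst (snd (lam t)) + snd (snd (lam t)) * (fst (snd (\<gamma> t)))\<^sup>2"
  using assms by (cases "\<gamma> t") (auto simp: switching_def Yfield_def Yfield_sign_def inner_prod_def)

lemma ham_Yfield:
  "ham 2 Yfield l p w = (w 1 + w 2) * (fst l + snd (snd l) * (fst (snd p))\<^sup>2) + (w 1 - w 2) * fst (snd l)"
  by (cases p) (simp add: ham_def numeral_2_eq_2 Yfield_def inner_prod_def algebra_simps)

lemma ham_Yfield_has_derivative_point:
  "((\<lambda>p. ham 2 Yfield l p w) has_derivative
     (\<lambda>v. (0, 2 * snd (snd l) * fst (snd p) * (w 1 + w 2), 0) \<bullet> v)) (at p)"
  unfolding ham_Yfield
  by (auto intro!: derivative_eq_intros simp: inner_prod_def power2_eq_square algebra_simps)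

lemma ham_Yfield_has_derivative_covector:
  "((\<lambda>l. ham 2 Yfield l p w) has_derivative
     (\<lambda>v. (w 1 + w 2, w 1 - w 2, (w 1 + w 2) * (fst (snd p))\<^sup>2) \<bullet> v)) (at l)"
proof -
  have "(\<lambda>l. ham 2 Yfield l p w) = (\<lambda>l. (w 1 + w 2, w 1 - w 2, (w 1 + w 2) * (fst (snd p))\<^sup>2) \<bullet> l)"
    by (auto simp: ham_Yfield inner_prod_def algebra_simps)
  then show ?thesis
    using bounded_linear_inner_right bounded_linear_imp_has_derivative by metis
qed

lemma Yfield_hamiltonian_equations:
  assumes "((\<lambda>p. ham 2 Yfield (lam t) p w) has_derivative (\<lambda>v. gp \<bullet> v)) (at (\<gamma> t))"
    and "((\<lambda>l. ham 2 Yfield l (\<gamma> t) w) has_derivative (\<lambda>v. gl \<bullet> v)) (at (lam t))"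
    and lam': "(lam has_vector_derivative - gp) (at t)" and \<gamma>': "(\<gamma> has_vector_derivative gl) (at t)"
  shows "((\<lambda>s. fst (lam s)) has_real_derivative 0) (at t) \<and>
      ((\<lambda>s. snd (snd (lam s))) has_real_derivative 0) (at t) \<and>
      ((\<lambda>s. fst (snd (lam s))) has_real_derivative
         - (2 * snd (snd (lam t)) * fst (snd (\<gamma> t)) * (w 1 + w 2))) (at t) \<and>
      ((\<lambda>s. fst (snd (\<gamma> s))) has_real_derivative w 1 - w 2) (at t)"
proof -
  have "gp = (0, 2 * snd (snd (lam t)) * fst (snd (\<gamma> t)) * (w 1 + w 2), 0)"
    and "gl = (w 1 + w 2, w 1 - w 2, (w 1 + w 2) * (fst (snd (\<gamma> t)))\<^sup>2)"
    using has_derivative_unique[OF assms(1) ham_Yfield_has_derivative_point]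
      has_derivative_unique[OF assms(2) ham_Yfield_has_derivative_covector]
    unfolding fun_eq_iff vector_eq_rdot by blast+
  then show ?thesis
    using has_vector_derivative_fst[OF lam'] has_vector_derivative_snd[OF has_vector_derivative_snd[OF lam']]
      has_vector_derivative_fst[OF has_vector_derivative_snd[OF lam']]
      has_vector_derivative_fst[OF has_vector_derivative_snd[OF \<gamma>']]
    by (simp add: has_real_derivative_iff_has_vector_derivative)
qed

text \<open>
  Pontryagin's conditions at time \<open>t\<close> in the coordinates \<open>lam = (px, py, pz)\<close>: the Hamiltonian
  equations for \<open>H = (u1 + u2) (px + pz y\<^sup>2) + (u1 - u2) py\<close> (only the \<open>y\<close>-component of the
  trajectory equation is needed) and the maximum condition.
\<close>

definition Yfield_pmp_at ::
  "(real \<Rightarrow> R3) \<Rightarrow> (real \<Rightarrow> R3) \<Rightarrow> (real \<Rightarrow> nat \<Rightarrow> real) \<Rightarrow> real \<Rightarrow> real \<Rightarrow> bool" where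
  "Yfield_pmp_at lam \<gamma> u c0 t \<longleftrightarrow>
    ((\<lambda>s. fst (lam s)) has_real_derivative 0) (at t) \<and>
    ((\<lambda>s. snd (snd (lam s))) has_real_derivative 0) (at t) \<and>
    ((\<lambda>s. fst (snd (lam s))) has_real_derivative
       - (2 * snd (snd (lam t)) * fst (snd (\<gamma> t)) * (u t 1 + u t 2))) (at t) \<and>
    ((\<lambda>s. fst (snd (\<gamma> s))) has_real_derivative u t 1 - u t 2) (at t) \<and>
    \<bar>u t 1\<bar> \<le> 1 \<and> \<bar>u t 2\<bar> \<le> 1 \<and>
    u t 1 * switching Yfield lam \<gamma> 1 t + u t 2 * switching Yfield lam \<gamma> 2 t = c0 \<and>
    \<bar>switching Yfield lam \<gamma> 1 t\<bar> + \<bar>switching Yfield lam \<gamma> 2 t\<bar> = c0"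

locale Yfield_extremal =
  fixes T :: real and lam \<gamma> :: "real \<Rightarrow> R3" and u :: "real \<Rightarrow> nat \<Rightarrow> real"
    and c0 :: real and N :: "real set"
  assumes ac_lam: "ac_on {0..T} lam"
    and ac_traj: "ac_on {0..T} \<gamma>"
    and negligible_N: "negligible N"
    and pmp: "\<And>t. t \<in> {0<..<T} - N \<Longrightarrow> Yfield_pmp_at lam \<gamma> u c0 t"

lemma extremal_pair_Yfield_pmp_ae:
  assumes ext: "extremal_pair 2 Yfield T lam \<gamma> u"
  obtains c0 where "AE t in lborel. t \<in> {0<..<T} \<longrightarrow> Yfield_pmp_at lam \<gamma> u c0 t"
proof -
  obtain c0 where max: "AE t in lborel. t \<in> {0..T} \<longrightarrow>
      (\<Sum>i=1..2. u t i * (lam t \<bullet> Yfield i (\<gamma> t))) = c0 \<and>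
      (\<Sum>i=1..2. \<bar>lam t \<bullet> Yfield i (\<gamma> t)\<bar>) = c0"
    using ext unfolding extremal_pair_def by blast
  have hamiltonian: "AE t in lborel. t \<in> {0..T} \<longrightarrow> (\<exists>gp gl.
      ((\<lambda>p. ham 2 Yfield (lam t) p (u t)) has_derivative (\<lambda>v. gp \<bullet> v)) (at (\<gamma> t)) \<and>
      ((\<lambda>l. ham 2 Yfield l (\<gamma> t) (u t)) has_derivative (\<lambda>v. gl \<bullet> v)) (at (lam t)) \<and>
      (lam has_vector_derivative (- gp)) (at t within {0..T}) \<and>
      (\<gamma> has_vector_derivative gl) (at t within {0..T}))"
    and bounds: "AE t in lborel. t \<in> {0..T} \<longrightarrow> (\<forall>i\<in>{1..2::nat}. \<bar>u t i\<bar> \<le> 1) \<and>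
      (\<gamma> has_vector_derivative (\<Sum>i=1..2. u t i *\<^sub>R Yfield i (\<gamma> t))) (at t within {0..T})"
    using ext unfolding extremal_pair_def admissible_def by blast+
  have "AE t in lborel. t \<in> {0<..<T} \<longrightarrow> Yfield_pmp_at lam \<gamma> u c0 t"
    using max hamiltonian bounds
  proof eventually_elim
    case (elim t)
    show ?case
    proof
      assume t: "t \<in> {0<..<T}"
      then have "at t within {0..T} = at t"
        by (intro at_within_interior) simp
      with elim t obtain gp gl where
        "((\<lambda>p. ham 2 Yfield (lam t) p (u t)) has_derivative (\<lambda>v. gp \<bullet> v)) (at (\<gamma> t))"
        "((\<lambda>l. ham 2 Yfield l (\<gamma> t) (u t)) has_derivative (\<lambda>v. gl \<bullet> v)) (at (lam t))"
        "(lam has_vector_derivative (- gp)) (at t)" "(\<gamma> has_vector_derivative gl) (at t)"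
        by auto
      note Yfield_hamiltonian_equations[OF this]
      moreover have "\<bar>u t 1\<bar> \<le> 1 \<and> \<bar>u t 2\<bar> \<le> 1 \<and>
          u t 1 * switching Yfield lam \<gamma> 1 t + u t 2 * switching Yfield lam \<gamma> 2 t = c0 \<and>
          \<bar>switching Yfield lam \<gamma> 1 t\<bar> + \<bar>switching Yfield lam \<gamma> 2 t\<bar> = c0"
        using elim t by (simp add: numeral_2_eq_2 switching_def)
      ultimately show "Yfield_pmp_at lam \<gamma> u c0 t"
        unfolding Yfield_pmp_at_def by blast
    qed
  qed
  then show thesis by (rule that)
qed

lemma extremal_pair_imp_Yfield_extremal:
  assumes ext: "extremal_pair 2 Yfield T lam \<gamma> u"
  obtains c0 N where "Yfield_extremal T lam \<gamma> u c0 N"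
proof -
  obtain c0 where ae: "AE t in lborel. t \<in> {0<..<T} \<longrightarrow> Yfield_pmp_at lam \<gamma> u c0 t"
    using extremal_pair_Yfield_pmp_ae[OF ext] by blast
  obtain N where "negligible N" and N: "\<And>t. t \<notin> N \<Longrightarrow> t \<in> {0<..<T} \<longrightarrow> Yfield_pmp_at lam \<gamma> u c0 t"
    using AE_lborel_negligible_exception[OF ae] by blast
  have "Yfield_extremal T lam \<gamma> u c0 N"
  proof
    show "ac_on {0..T} lam" "ac_on {0..T} \<gamma>"
      using ext unfolding extremal_pair_def admissible_def by blast+
    show "Yfield_pmp_at lam \<gamma> u c0 t" if "t \<in> {0<..<T} - N" for t
      using N that by blast
  qed fact
  then show thesis by (rule that)
qed

context Yfield_extremal
begin

abbreviation px :: "real \<Rightarrow> real" where "px t \<equiv> fst (lam t)"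
abbreviation py :: "real \<Rightarrow> real" where "py t \<equiv> fst (snd (lam t))"
abbreviation pz :: "real \<Rightarrow> real" where "pz t \<equiv> snd (snd (lam t))"
abbreviation y :: "real \<Rightarrow> real" where "y t \<equiv> fst (snd (\<gamma> t))"
abbreviation sw :: "nat \<Rightarrow> real \<Rightarrow> real" where "sw \<equiv> switching Yfield lam \<gamma>"

lemmas pmp_conditions = pmp[unfolded Yfield_pmp_at_def]

lemmas ac_px = ac_on_fst[OF ac_lam]
lemmas ac_py = ac_on_fst[OF ac_on_snd[OF ac_lam]]
lemmas ac_pz = ac_on_snd[OF ac_on_snd[OF ac_lam]]
lemmas ac_y = ac_on_fst[OF ac_on_snd[OF ac_traj]]

lemma continuous_on_switching:
  assumes "j \<in> {1, 2}"
  shows "continuous_on {0..T} (sw j)"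
  unfolding switching_Yfield[OF assms]
  using ac_on_imp_continuous_on[OF ac_lam] ac_on_imp_continuous_on[OF ac_traj]
  by (intro continuous_intros)

lemma affine_on_subinterval:
  assumes F: "ac_on {0..T} F" and sub: "{a..b} \<subseteq> {0..T}"
    and deriv: "\<And>t. t \<in> {a<..<b} - N \<Longrightarrow> (F has_real_derivative c) (at t)"
    and "s \<in> {a..b}" "t \<in> {a..b}"
  shows "F t = F s + c * (t - s)"
  using ac_on_subset[OF F sub] negligible_N deriv assms(4,5)
  by (rule ac_on_has_real_derivative_ae_imp_affine)

lemma subinterval_interior:
  "{a..b} \<subseteq> {0..T} \<Longrightarrow> t \<in> {a<..<b} - N \<Longrightarrow> t \<in> {0<..<T} - N"
  by (cases "a < b") auto

lemma px_const:
  assumes "s \<in> {0..T}" "t \<in> {0..T}"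
  shows "px t = px s"
proof -
  have "px t = px s + 0 * (t - s)"
    by (rule affine_on_subinterval[OF ac_px order_refl _ assms]) (use pmp_conditions in blast)
  then show ?thesis by simp
qed

lemma pz_const:
  assumes "s \<in> {0..T}" "t \<in> {0..T}"
  shows "pz t = pz s"
proof -
  have "pz t = pz s + 0 * (t - s)"
    by (rule affine_on_subinterval[OF ac_pz order_refl _ assms]) (use pmp_conditions in blast)
  then show ?thesis by simp
qed

lemma py_const:
  assumes "{a..b} \<subseteq> {0..T}"
    and "\<And>t. t \<in> {a<..<b} - N \<Longrightarrow> pz t * y t * (u t 1 + u t 2) = 0"
    and "s \<in> {a..b}" "t \<in> {a..b}"
  shows "py t = py s"
proof -
  have "py t = py s + 0 * (t - s)"
  proof (rule affine_on_subinterval[OF ac_py assms(1) _ assms(3,4)])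
    fix t assume t: "t \<in> {a<..<b} - N"
    then have "(py has_real_derivative - (2 * (pz t * y t * (u t 1 + u t 2)))) (at t)"
      using pmp_conditions[OF subinterval_interior[OF assms(1) t]] by (simp add: mult.assoc)
    then show "(py has_real_derivative 0) (at t)"
      unfolding assms(2)[OF t] by simp
  qed
  then show ?thesis by simp
qed

lemma y_affine:
  assumes "{a..b} \<subseteq> {0..T}"
    and "\<And>t. t \<in> {a<..<b} - N \<Longrightarrow> u t 1 - u t 2 = c"
    and "s \<in> {a..b}" "t \<in> {a..b}"
  shows "y t = y s + c * (t - s)"
proof (rule affine_on_subinterval[OF ac_y assms(1) _ assms(3,4)])
  fix t assume t: "t \<in> {a<..<b} - N"
  then show "(y has_real_derivative c) (at t)"
    using pmp_conditions[OF subinterval_interior[OF assms(1) t]] assms(2)[OF t] by simp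
qed

text \<open>Here \<open>3 - j\<close> is the index of the other vector field.\<close>

lemma switching_has_derivative:
  assumes j: "j \<in> {1, 2}" and t: "t \<in> {0<..<T} - N"
  shows "(sw j has_real_derivative - 4 * Yfield_sign j * pz t * y t * u t (3 - j)) (at t)"
proof -
  have sw: "sw j = (\<lambda>t. px t + Yfield_sign j * py t + pz t * (y t)\<^sup>2)"
    using switching_Yfield[OF j] by (simp add: fun_eq_iff)
  have "(sw j has_real_derivative
      0 + Yfield_sign j * - (2 * pz t * y t * (u t 1 + u t 2)) + (0 * (y t)\<^sup>2 + pz t * (2 * y t * (u t 1 - u t 2)))) (at t)"
    unfolding sw using pmp_conditions[OF t]
    by (auto intro!: derivative_eq_intros)
  moreover have "0 + Yfield_sign j * - (2 * pz t * y t * (u t 1 + u t 2)) + (0 * (y t)\<^sup>2 + pz t * (2 * y t * (u t 1 - u t 2)))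
      = - 4 * Yfield_sign j * pz t * y t * u t (3 - j)"
    using j by (elim insertE) (simp_all add: Yfield_sign_def algebra_simps)
  ultimately show ?thesis by simp
qed

lemma c0_pos:
  assumes "{a..b} \<subseteq> {0..T}" "a < b" and reg: "\<forall>t\<in>{a<..<b}. sw 1 t \<noteq> 0 \<and> sw 2 t \<noteq> 0"
  shows "c0 > 0"
proof -
  obtain t where t: "t \<in> {a<..<b} - N"
    using greaterThanLessThan_diff_negligible_nonempty[OF \<open>a < b\<close> negligible_N] .
  then have "\<bar>sw 1 t\<bar> + \<bar>sw 2 t\<bar> = c0"
    using pmp_conditions[OF subinterval_interior[OF assms(1) t]] by blast
  with reg t show ?thesis by force
qed

lemma pz_nonzero:
  assumes j: "j \<in> {1, 2}" and "s \<in> {0..T}" "t \<in> {0..T}" and "sw j s = 0" "sw j t \<noteq> 0"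
  shows "pz s \<noteq> 0"
proof
  assume "pz s = 0"
  then have pz: "pz r = 0" if "r \<in> {0..T}" for r
    using pz_const[OF \<open>s \<in> {0..T}\<close> that] by simp
  have "py t = py s"
    using pz by (intro py_const[OF order_refl _ \<open>s \<in> {0..T}\<close> \<open>t \<in> {0..T}\<close>]) auto
  then have "sw j t = sw j s"
    using px_const[OF \<open>s \<in> {0..T}\<close> \<open>t \<in> {0..T}\<close>] pz assms(2,3) by (simp add: switching_Yfield[OF j])
  with assms(4,5) show False by simp
qed

lemma singular_arc_y_zero:
  assumes j: "j \<in> {1, 2}" and "c0 > 0" and "s \<in> {0..T}" "pz s \<noteq> 0"
    and sub: "{a..b} \<subseteq> {0..T}" and "a < b" and sing: "\<forall>r\<in>{a<..<b}. sw j r = 0"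
    and "t \<in> {a..b}"
  shows "y t = 0"
proof (rule continuous_on_zero_ae_imp_zero[OF _ \<open>a < b\<close> negligible_N _ \<open>t \<in> {a..b}\<close>])
  show "continuous_on {a..b} y"
    using ac_on_imp_continuous_on[OF ac_on_subset[OF ac_y sub]] .
  fix r assume r: "r \<in> {a<..<b} - N"
  then have r': "r \<in> {0<..<T} - N" by (rule subinterval_interior[OF sub])
  have "(sw j has_real_derivative 0) (at r)"
    using r sing
    by (intro has_field_derivative_transform_within_open[OF DERIV_const, where S = "{a<..<b}"]) auto
  then have "- 4 * Yfield_sign j * pz r * y r * u r (3 - j) = 0"
    by (rule DERIV_unique[OF switching_has_derivative[OF j r']])
  \<comment> \<open>with \<open>sw j r = 0\<close> the other switching function carries all of \<open>c0 > 0\<close>\<close>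
  moreover have "u r (3 - j) \<noteq> 0"
    using pmp_conditions[OF r'] sing r j \<open>c0 > 0\<close> by (elim insertE) auto
  moreover have "pz r \<noteq> 0"
    using pz_const[OF \<open>s \<in> {0..T}\<close>, of r] r' \<open>pz s \<noteq> 0\<close> by auto
  ultimately show "y r = 0"
    by (simp add: Yfield_sign_def split: if_splits)
qed

lemma regular_arc_controls:
  assumes sub: "{a..b} \<subseteq> {0..T}" and "a < b" and reg: "\<forall>t\<in>{a<..<b}. sw 1 t \<noteq> 0 \<and> sw 2 t \<noteq> 0"
  obtains s1 s2 where "\<bar>s1\<bar> = 1" "\<bar>s2\<bar> = 1" "\<And>t. t \<in> {a<..<b} - N \<Longrightarrow> u t 1 = s1 \<and> u t 2 = s2"
proof -
  define m where "m = (a + b) / 2"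
  have m: "m \<in> {a<..<b}" using \<open>a < b\<close> by (simp add: m_def)
  have sgn_const: "sgn (sw i t) = sgn (sw i m)" if "i \<in> {1, 2}" "t \<in> {a<..<b}" for i t
  proof -
    have "continuous_on {a<..<b} (sw i)"
      using continuous_on_switching[OF that(1)] by (rule continuous_on_subset) (use sub in auto)
    then have "continuous_on {a<..<b} (\<lambda>t. sgn (sw i t))"
      using reg that(1) by (intro continuous_on_sgn) auto
    moreover have "finite ((\<lambda>t. sgn (sw i t)) ` {a<..<b})"
      by (rule finite_subset[of _ "{-1, 0, 1}"]) (auto simp: sgn_if)
    ultimately have "(\<lambda>t. sgn (sw i t)) constant_on {a<..<b}"
      by (intro continuous_finite_range_constant) auto
    with that(2) m show ?thesis by (auto simp: constant_on_def)
  qed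
  have "u t 1 = sgn (sw 1 m) \<and> u t 2 = sgn (sw 2 m)" if t: "t \<in> {a<..<b} - N" for t
  proof -
    have "\<bar>u t 1\<bar> \<le> 1" "\<bar>u t 2\<bar> \<le> 1"
      and "u t 1 * sw 1 t + u t 2 * sw 2 t = \<bar>sw 1 t\<bar> + \<bar>sw 2 t\<bar>"
      using pmp_conditions[OF subinterval_interior[OF sub t]] by auto
    then have "u t 1 = sgn (sw 1 t)" "u t 2 = sgn (sw 2 t)"
      using reg t by (auto intro: maximizing_control_eq_sgn simp: add.commute)
    with sgn_const t show ?thesis by auto
  qed
  moreover have "\<bar>sgn (sw 1 m)\<bar> = 1" "\<bar>sgn (sw 2 m)\<bar> = 1"
    using reg m by (auto simp: abs_sgn_eq)
  ultimately show thesis by (rule that[rotated 2])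
qed

lemma regular_arc_switching_quadratic:
  assumes j: "j \<in> {1, 2}" and sub: "{a..b} \<subseteq> {0..T}" and "a < b" and t0: "t0 \<in> {a, b}"
    and reg: "\<forall>t\<in>{a<..<b}. sw 1 t \<noteq> 0 \<and> sw 2 t \<noteq> 0"
    and "sw j t0 = 0" and "y t0 = 0" and t: "t \<in> {a..b}"
  shows "sw j t = 4 * pz t0 * (t - t0)\<^sup>2"
proof -
  obtain s1 s2 where s: "\<bar>s1\<bar> = 1" "\<bar>s2\<bar> = 1"
    and u: "\<And>r. r \<in> {a<..<b} - N \<Longrightarrow> u r 1 = s1 \<and> u r 2 = s2"
    using regular_arc_controls[OF sub \<open>a < b\<close> reg] by blast
  have "t0 \<in> {a..b}" using t0 \<open>a < b\<close> by auto
  have sw_eq: "sw j r - sw j t0 = Yfield_sign j * (py r - py t0) + pz t0 * (y r)\<^sup>2"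
    if "r \<in> {a..b}" for r
    using px_const[of t0 r] pz_const[of t0 r] that \<open>t0 \<in> {a..b}\<close> sub \<open>y t0 = 0\<close>
    by (auto simp: switching_Yfield[OF j] algebra_simps)
  \<comment> \<open>equal controls would freeze \<open>y\<close> and \<open>py\<close>, so \<open>sw j\<close> would vanish as it does at \<open>t0\<close>\<close>
  have "s2 = - s1"
  proof (rule ccontr)
    assume "s2 \<noteq> - s1"
    with s have "s1 = s2" by (auto simp: abs_if split: if_splits)
    have y0: "y r = 0" if "r \<in> {a..b}" for r
      using y_affine[OF sub _ \<open>t0 \<in> {a..b}\<close> that, of 0] u \<open>s1 = s2\<close> \<open>y t0 = 0\<close> by simp
    define m where "m = (a + b) / 2"
    have m: "m \<in> {a<..<b}" using \<open>a < b\<close> by (simp add: m_def)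
    have "py m = py t0"
      using y0 \<open>t0 \<in> {a..b}\<close> m by (intro py_const[OF sub]) auto
    then have "sw j m = 0"
      using sw_eq[of m] y0[of m] m \<open>sw j t0 = 0\<close> by simp
    with reg m j show False by auto
  qed
  then have "py t = py t0"
    using u \<open>t0 \<in> {a..b}\<close> t by (intro py_const[OF sub]) auto
  moreover have "y t = (s1 - s2) * (t - t0)"
    using y_affine[OF sub _ \<open>t0 \<in> {a..b}\<close> t, of "s1 - s2"] u \<open>y t0 = 0\<close> by simp
  moreover have "(s1 - s2)\<^sup>2 = 4"
    using \<open>s2 = - s1\<close> s by (auto simp: abs_if power2_eq_square split: if_splits)
  ultimately show ?thesis
    using sw_eq[OF t] \<open>sw j t0 = 0\<close> by (simp add: power_mult_distrib)
qed

lemma switching_at_junction: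
  assumes j: "j \<in> {1, 2}"
    and regular: "{a..b} \<subseteq> {0..T}" "a < b" "t0 \<in> {a, b}"
      "\<forall>t\<in>{a<..<b}. sw 1 t \<noteq> 0 \<and> sw 2 t \<noteq> 0"
    and singular: "{c..d} \<subseteq> {0..T}" "c < d" "t0 \<in> {c, d}" "\<forall>t\<in>{c<..<d}. sw j t = 0"
  shows "pz t0 \<noteq> 0"
    and "\<And>t. t \<in> {a..b} \<Longrightarrow> sw j t = 4 * pz t0 * (t - t0)\<^sup>2"
    and "\<And>t. t \<in> {c..d} \<Longrightarrow> sw j t = 0"
proof -
  show sw_singular: "sw j t = 0" if "t \<in> {c..d}" for t
    by (rule continuous_on_zero_ae_imp_zero[OF continuous_on_subset[OF continuous_on_switching[OF j]
          singular(1)] singular(2) negligible_empty _ that])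
      (use singular(4) in auto)
  then have "sw j t0 = 0" using singular(2,3) by auto
  obtain t where t: "t \<in> {a<..<b}" using regular(2) by (meson dense greaterThanLessThan_iff)
  have "t0 \<in> {0..T}" "t \<in> {0..T}" using regular(1-3) t by auto
  moreover have "sw j t \<noteq> 0" using regular(4) t j by auto
  ultimately show "pz t0 \<noteq> 0"
    using pz_nonzero[OF j _ _ \<open>sw j t0 = 0\<close>] by blast
  have "y t0 = 0"
    using singular_arc_y_zero[OF j c0_pos[OF regular(1,2,4)] \<open>t0 \<in> {0..T}\<close> \<open>pz t0 \<noteq> 0\<close>
        singular(1,2,4)] singular(2,3) by auto
  then show "sw j t = 4 * pz t0 * (t - t0)\<^sup>2" if "t \<in> {a..b}" for t
    by (rule regular_arc_switching_quadratic[OF j regular(1-4) \<open>sw j t0 = 0\<close> _ that])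
qed

end

lemma has_real_derivative_zero_if_quadratic_bound:
  fixes f :: "real \<Rightarrow> real"
  assumes "e > 0" and bound: "\<And>t. \<bar>t - t0\<bar> < e \<Longrightarrow> \<bar>f t\<bar> \<le> C * (t - t0)\<^sup>2"
  shows "(f has_real_derivative 0) (at t0)"
proof -
  have "f t0 = 0" using bound[of t0] \<open>e > 0\<close> by simp
  have "\<bar>(f t - f t0) / (t - t0)\<bar> \<le> \<bar>C\<bar> * \<bar>t - t0\<bar>" if "t \<noteq> t0" "dist t t0 < e" for t
  proof -
    have "\<bar>f t\<bar> \<le> \<bar>C\<bar> * \<bar>t - t0\<bar> * \<bar>t - t0\<bar>"
      using bound[of t] that abs_ge_self[of C] mult_right_mono[of C "\<bar>C\<bar>" "(t - t0)\<^sup>2"]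
      by (auto simp: dist_real_def power2_eq_square mult.assoc)
    with that(1) \<open>f t0 = 0\<close> show ?thesis
      by (simp add: abs_divide divide_le_eq)
  qed
  then have "\<forall>\<^sub>F t in at t0. norm ((f t - f t0) / (t - t0)) \<le> \<bar>C\<bar> * \<bar>t - t0\<bar>"
    unfolding eventually_at using \<open>e > 0\<close> by auto
  moreover have "((\<lambda>t. \<bar>C\<bar> * \<bar>t - t0\<bar>) \<longlongrightarrow> 0) (at t0)"
    by (intro tendsto_eq_intros) auto
  ultimately have "((\<lambda>t. (f t - f t0) / (t - t0)) \<longlongrightarrow> 0) (at t0)"
    by (rule Lim_null_comparison)
  then show ?thesis by (simp add: has_field_derivative_iff)
qed

lemma one_sided_intervals_split:
  fixes t0 \<epsilon> :: real
  assumes "\<epsilon> > 0"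
    and "(I = {t0 - \<epsilon><..<t0} \<and> P {t0<..<t0 + \<epsilon>}) \<or> (I = {t0<..<t0 + \<epsilon>} \<and> P {t0 - \<epsilon><..<t0})"
  obtains a b c d where "I = {a<..<b}" "a < b" "t0 \<in> {a, b}" "P {c<..<d}" "c < d" "t0 \<in> {c, d}"
    and "{a..b} \<union> {c..d} = {t0 - \<epsilon>..t0 + \<epsilon>}"
  using assms(2)
proof (elim disjE conjE)
  assume "I = {t0 - \<epsilon><..<t0}" "P {t0<..<t0 + \<epsilon>}"
  then show thesis
    using assms(1) by (intro that[of "t0 - \<epsilon>" t0 t0 "t0 + \<epsilon>"]) auto
next
  assume "I = {t0<..<t0 + \<epsilon>}" "P {t0 - \<epsilon><..<t0}"
  then show thesis
    using assms(1) by (intro that[of t0 "t0 + \<epsilon>" "t0 - \<epsilon>" t0]) auto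
qed

theorem mainTheorem13:
  fixes T t0 \<epsilon> :: real and lam \<gamma> :: "real \<Rightarrow> R3" and u :: "real \<Rightarrow> nat \<Rightarrow> real"
    and j :: nat and I :: "real set"
  assumes ext: "extremal_pair 2 Yfield T lam \<gamma> u"
    and j: "j \<in> {1, 2}"
    and eps: "\<epsilon> > 0" "{t0 - \<epsilon><..<t0 + \<epsilon>} \<subseteq> {0..T}"
    and arcs: "(I = {t0 - \<epsilon><..<t0} \<and> singular_arc Yfield lam \<gamma> j {t0<..<t0 + \<epsilon>})
             \<or> (I = {t0<..<t0 + \<epsilon>} \<and> singular_arc Yfield lam \<gamma> j {t0 - \<epsilon><..<t0})"
    and reg: "regular_arc 2 Yfield lam \<gamma> I"
  shows "(\<exists>a b c. a \<noteq> 0 \<and> (\<forall>t\<in>I. switching Yfield lam \<gamma> j t = a * t\<^sup>2 + b * t + c))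
       \<and> (switching Yfield lam \<gamma> j has_real_derivative 0) (at t0)"
proof -
  obtain c0 N where "Yfield_extremal T lam \<gamma> u c0 N"
    using extremal_pair_imp_Yfield_extremal[OF ext] .
  then interpret Yfield_extremal T lam \<gamma> u c0 N .
  obtain a b c d where I: "I = {a<..<b}" "a < b" "t0 \<in> {a, b}"
    and sing: "singular_arc Yfield lam \<gamma> j {c<..<d}" "c < d" "t0 \<in> {c, d}"
    and cover: "{a..b} \<union> {c..d} = {t0 - \<epsilon>..t0 + \<epsilon>}"
    using one_sided_intervals_split[OF eps(1) arcs] by blast
  have "{a..b} \<union> {c..d} \<subseteq> {0..T}"
    using closure_mono[OF eps(2)] eps(1) by (simp add: cover)
  then have sub: "{a..b} \<subseteq> {0..T}" "{c..d} \<subseteq> {0..T}" by simp_all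
  note junction = switching_at_junction[OF j sub(1) I(2,3) _ sub(2) sing(2,3)
      sing(1)[unfolded singular_arc_def]]
  have reg': "\<forall>t\<in>{a<..<b}. sw 1 t \<noteq> 0 \<and> sw 2 t \<noteq> 0"
    using reg I(1) by (simp add: regular_arc_def)
  show ?thesis
  proof
    show "\<exists>a b c. a \<noteq> 0 \<and> (\<forall>t\<in>I. sw j t = a * t\<^sup>2 + b * t + c)"
      using junction[OF reg'] I(1)
      by (intro exI[of _ "4 * pz t0"] exI[of _ "- 8 * pz t0 * t0"] exI[of _ "4 * pz t0 * t0\<^sup>2"])
        (auto simp: power2_eq_square algebra_simps)
    show "(sw j has_real_derivative 0) (at t0)"
    proof (rule has_real_derivative_zero_if_quadratic_bound[OF eps(1)])
      fix t assume "\<bar>t - t0\<bar> < \<epsilon>"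
      then have "t \<in> {a..b} \<union> {c..d}" using cover by auto
      then show "\<bar>sw j t\<bar> \<le> 4 * \<bar>pz t0\<bar> * (t - t0)\<^sup>2"
        using junction(2,3)[OF reg'] by (auto simp: abs_mult)
    qed
  qed
qed

end
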